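(* In the setting described in the context, if $\tau$ is the random slot allocation, then $\mathbb E\left[\sum_{k\in U}f_\tau(k)w_k\right]\ge(1-e^{-\delta})R$, where $R$ is the maximum total reward of a feasible service placement.
   Context: An SPSC instance: finite sets $S$ (services), $V$ (nodes), $U$ (users); sizes $s_i>0$; capacities $c_j>0$; for each user $k$ a service $i_k\in S$, a set $T_k\subseteq V$, a reward $w_k>0$. A service placement $X=\{X_i\subseteq V:i\in S\}$ is feasible iff $\sum_is_i\mathbf 1[j\in X_i]\le c_j$ for all $j$; its total reward is $\sum_kw_k\mathbf 1[T_k\cap X_{i_k}\ne\emptyset]$. Let $\{x_{ij}\},\{y_k\}$ be an optimal solution of the LP with nonnegative variables: maximize $\sum_ky_kw_k$ s.t. $y_k\le\sum_{j\in T_k}x_{i_kj}$, $y_k\le1$; $\sum_ix_{ij}s_i\le c_j$; $x_{ij}=0$ if $s_i>c_j$; $0\le x_{ij}\le1$. Fix $\beta<1$ with $\max_is_i\le\beta\min_jc_j$; $\gamma:=1-\sqrt\beta$, $\delta:=(1-\sqrt\beta)^2$, $\mathbb N=\{1,2,\dots\}$. For $j\in V,q\in\mathbb N$: $P_j^q:=\{i:\gamma^qc_j\beta<s_i\le\gamma^{q-1}c_j\beta\}$, $d_j^q:=\sum_{i\in P_j^q}x_{ij}$, $v_j:=\delta c_j/\sum_is_ix_{ij}$, $n_j^q:=\lceil v_jd_j^q\rceil$. Slot set $\Lambda$: for every $j,q$ with $P_j^q\ne\emptyset$, $n_j^q$ slots $\sigma$ with node $\nu(\sigma)=j$, class $\kappa(\sigma)=q$.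 A slot allocation is $\tau:\Lambda\to S$ with $\tau(\sigma)\in P^{\kappa(\sigma)}_{\nu(\sigma)}$; $X^\tau_i:=\{j:\exists\sigma,\nu(\sigma)=j,\tau(\sigma)=i\}$; $f_\tau(k):=\mathbf 1[T_k\cap X^\tau_{i_k}\ne\emptyset]$. The random slot allocation: for each slot $\sigma$ independently, $\tau(\sigma)=i$ with probability $x_{i\nu(\sigma)}/d^{\kappa(\sigma)}_{\nu(\sigma)}$ for $i\in P^{\kappa(\sigma)}_{\nu(\sigma)}$. *)

theory Defs
  imports Complex_Main "HOL-Library.FuncSet"
begin

text \<open>SPSC instance: services S (type 's), nodes V (type 'v), users U (type 'u);
  sizes s, capacities c, requested service svc k (= i_k), node sets T k, rewards w k.\<close>

definition lp_feasible ::
  "'s set \<Rightarrow> 'v set \<Rightarrow> 'u set \<Rightarrow> ('s \<Rightarrow> real) \<Rightarrow> ('v \<Rightarrow> real) \<Rightarrow> ('u \<Rightarrow> 's) \<Rightarrow> ('u \<Rightarrow> 'v set)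
   \<Rightarrow> ('s \<Rightarrow> 'v \<Rightarrow> real) \<Rightarrow> ('u \<Rightarrow> real) \<Rightarrow> bool" where
  "lp_feasible S V U s c svc T x y \<longleftrightarrow>
     (\<forall>k\<in>U. 0 \<le> y k \<and> y k \<le> (\<Sum>j\<in>T k. x (svc k) j) \<and> y k \<le> 1) \<and>
     (\<forall>j\<in>V. (\<Sum>i\<in>S. x i j * s i) \<le> c j) \<and>
     (\<forall>i\<in>S. \<forall>j\<in>V. s i > c j \<longrightarrow> x i j = 0) \<and>
     (\<forall>i\<in>S. \<forall>j\<in>V. 0 \<le> x i j \<and> x i j \<le> 1)"

definition lp_objective :: "'u set \<Rightarrow> ('u \<Rightarrow> real) \<Rightarrow> ('u \<Rightarrow> real) \<Rightarrow> real" where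
  "lp_objective U w y = (\<Sum>k\<in>U. y k * w k)"

definition lp_optimal ::
  "'s set \<Rightarrow> 'v set \<Rightarrow> 'u set \<Rightarrow> ('s \<Rightarrow> real) \<Rightarrow> ('v \<Rightarrow> real) \<Rightarrow> ('u \<Rightarrow> 's) \<Rightarrow> ('u \<Rightarrow> 'v set)
   \<Rightarrow> ('u \<Rightarrow> real) \<Rightarrow> ('s \<Rightarrow> 'v \<Rightarrow> real) \<Rightarrow> ('u \<Rightarrow> real) \<Rightarrow> bool" where
  "lp_optimal S V U s c svc T w x y \<longleftrightarrow>
     lp_feasible S V U s c svc T x y \<and>
     (\<forall>x' y'. lp_feasible S V U s c svc T x' y' \<longrightarrow> lp_objective U w y' \<le> lp_objective U w y)"

definition feasible_placement ::
  "'s set \<Rightarrow> 'v set \<Rightarrow> ('s \<Rightarrow> real) \<Rightarrow> ('v \<Rightarrow> real) \<Rightarrow> ('s \<Rightarrow> 'v set) \<Rightarrow> bool" where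
  "feasible_placement S V s c X \<longleftrightarrow>
     (\<forall>i\<in>S. X i \<subseteq> V) \<and> (\<forall>j\<in>V. (\<Sum>i\<in>S. s i * (if j \<in> X i then 1 else 0)) \<le> c j)"

definition placement_reward ::
  "'u set \<Rightarrow> ('u \<Rightarrow> real) \<Rightarrow> ('u \<Rightarrow> 's) \<Rightarrow> ('u \<Rightarrow> 'v set) \<Rightarrow> ('s \<Rightarrow> 'v set) \<Rightarrow> real" where
  "placement_reward U w svc T X = (\<Sum>k\<in>U. w k * (if T k \<inter> X (svc k) \<noteq> {} then 1 else 0))"

definition opt_reward ::
  "'s set \<Rightarrow> 'v set \<Rightarrow> 'u set \<Rightarrow> ('s \<Rightarrow> real) \<Rightarrow> ('v \<Rightarrow> real) \<Rightarrow> ('u \<Rightarrow> real) \<Rightarrow> ('u \<Rightarrow> 's)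
   \<Rightarrow> ('u \<Rightarrow> 'v set) \<Rightarrow> real" where
  "opt_reward S V U s c w svc T =
     Max {placement_reward U w svc T X | X. feasible_placement S V s c X}"

text \<open>gamma = 1 - sqrt beta, delta = (1 - sqrt beta)^2. Classes are indexed by q >= 1.\<close>

definition cls :: "'s set \<Rightarrow> ('s \<Rightarrow> real) \<Rightarrow> ('v \<Rightarrow> real) \<Rightarrow> real \<Rightarrow> 'v \<Rightarrow> nat \<Rightarrow> 's set" where
  "cls S s c \<beta> j q =
     {i\<in>S. (1 - sqrt \<beta>) ^ q * c j * \<beta> < s i \<and> s i \<le> (1 - sqrt \<beta>) ^ (q - 1) * c j * \<beta>}"

definition dmass ::
  "'s set \<Rightarrow> ('s \<Rightarrow> real) \<Rightarrow> ('v \<Rightarrow> real) \<Rightarrow> real \<Rightarrow> ('s \<Rightarrow> 'v \<Rightarrow> real) \<Rightarrow> 'v \<Rightarrow> nat \<Rightarrow> real" where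
  "dmass S s c \<beta> x j q = (\<Sum>i\<in>cls S s c \<beta> j q. x i j)"

definition vfac :: "'s set \<Rightarrow> ('s \<Rightarrow> real) \<Rightarrow> ('v \<Rightarrow> real) \<Rightarrow> real \<Rightarrow> ('s \<Rightarrow> 'v \<Rightarrow> real) \<Rightarrow> 'v \<Rightarrow> real" where
  "vfac S s c \<beta> x j = (1 - sqrt \<beta>) ^ 2 * c j / (\<Sum>i\<in>S. s i * x i j)"

definition nslots ::
  "'s set \<Rightarrow> ('s \<Rightarrow> real) \<Rightarrow> ('v \<Rightarrow> real) \<Rightarrow> real \<Rightarrow> ('s \<Rightarrow> 'v \<Rightarrow> real) \<Rightarrow> 'v \<Rightarrow> nat \<Rightarrow> nat" where
  "nslots S s c \<beta> x j q = nat \<lceil>vfac S s c \<beta> x j * dmass S s c \<beta> x j q\<rceil>"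

definition slots ::
  "'s set \<Rightarrow> 'v set \<Rightarrow> ('s \<Rightarrow> real) \<Rightarrow> ('v \<Rightarrow> real) \<Rightarrow> real \<Rightarrow> ('s \<Rightarrow> 'v \<Rightarrow> real) \<Rightarrow> ('v \<times> nat \<times> nat) set" where
  "slots S V s c \<beta> x =
     {(j, q, m). j \<in> V \<and> 1 \<le> q \<and> cls S s c \<beta> j q \<noteq> {} \<and> m < nslots S s c \<beta> x j q}"

definition allocations ::
  "'s set \<Rightarrow> 'v set \<Rightarrow> ('s \<Rightarrow> real) \<Rightarrow> ('v \<Rightarrow> real) \<Rightarrow> real \<Rightarrow> ('s \<Rightarrow> 'v \<Rightarrow> real) \<Rightarrow> ('v \<times> nat \<times> nat \<Rightarrow> 's) set" where
  "allocations S V s c \<beta> x = PiE (slots S V s c \<beta> x) (\<lambda>\<sigma>. cls S s c \<beta> (fst \<sigma>) (fst (snd \<sigma>)))"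

definition placed ::
  "'s set \<Rightarrow> 'v set \<Rightarrow> ('s \<Rightarrow> real) \<Rightarrow> ('v \<Rightarrow> real) \<Rightarrow> real \<Rightarrow> ('s \<Rightarrow> 'v \<Rightarrow> real) \<Rightarrow> ('v \<times> nat \<times> nat \<Rightarrow> 's) \<Rightarrow> 's \<Rightarrow> 'v set" where
  "placed S V s c \<beta> x \<tau> i = {j. \<exists>\<sigma>\<in>slots S V s c \<beta> x. fst \<sigma> = j \<and> \<tau> \<sigma> = i}"

text \<open>Probability of an allocation under the random slot allocation: independent slots,
  slot sigma gets service i with probability x_{i,nu(sigma)} / d_{nu(sigma)}^{kappa(sigma)}.\<close>

definition alloc_prob ::
  "'s set \<Rightarrow> 'v set \<Rightarrow> ('s \<Rightarrow> real) \<Rightarrow> ('v \<Rightarrow> real) \<Rightarrow> real \<Rightarrow> ('s \<Rightarrow> 'v \<Rightarrow> real) \<Rightarrow> ('v \<times> nat \<times> nat \<Rightarrow> 's) \<Rightarrow> real" where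
  "alloc_prob S V s c \<beta> x \<tau> =
     (\<Prod>\<sigma>\<in>slots S V s c \<beta> x. x (\<tau> \<sigma>) (fst \<sigma>) / dmass S s c \<beta> x (fst \<sigma>) (fst (snd \<sigma>)))"

definition expected_reward ::
  "'s set \<Rightarrow> 'v set \<Rightarrow> 'u set \<Rightarrow> ('s \<Rightarrow> real) \<Rightarrow> ('v \<Rightarrow> real) \<Rightarrow> ('u \<Rightarrow> real) \<Rightarrow> ('u \<Rightarrow> 's)
   \<Rightarrow> ('u \<Rightarrow> 'v set) \<Rightarrow> real \<Rightarrow> ('s \<Rightarrow> 'v \<Rightarrow> real) \<Rightarrow> real" where
  "expected_reward S V U s c w svc T \<beta> x =
     (\<Sum>\<tau>\<in>allocations S V s c \<beta> x. alloc_prob S V s c \<beta> x \<tau> *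
        (\<Sum>k\<in>U. (if T k \<inter> placed S V s c \<beta> x \<tau> (svc k) \<noteq> {} then 1 else 0) * w k))"

end

theory Submission
  imports Defs "HOL-Analysis.Convex"
begin

(*
  Fix a user k requesting service i. Every node j in T k with x i j > 0 holds i in some size
  class q, and that class has n_j^q >= v_j d_j^q >= delta d_j^q slots (v_j >= delta because
  the LP respects the capacity c j), each of which receives i with probability x i j / d_j^q.
  So the probabilities p_sigma that the slots serve k sum to at least
  delta * (sum of x i j over T k) >= delta * y k. As the slots are filled independently,
  k stays unserved with probability prod (1 - p_sigma) <= exp (- delta * y k), and concavity
  gives 1 - exp (- delta * y k) >= (1 - exp (- delta)) * y k. Summing against the rewards and
  using that every feasible placement is itself an LP solution, so that R is at most the LP
  value, yields the bound.
*)

lemma product_prob_PiE_ex_mem: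
  fixes p :: "'a \<Rightarrow> 'b \<Rightarrow> real"
  assumes "finite A" and "\<And>a. a \<in> A \<Longrightarrow> finite (B a)"
    and "\<And>a. a \<in> A \<Longrightarrow> (\<Sum>b\<in>B a. p a b) = 1"
  shows "(\<Sum>\<tau>\<in>PiE A B. (\<Prod>a\<in>A. p a (\<tau> a)) * of_bool (\<exists>a\<in>A. \<tau> a \<in> E a))
       = 1 - (\<Prod>a\<in>A. 1 - (\<Sum>b\<in>B a \<inter> E a. p a b))"
proof -
  have miss: "of_bool (\<exists>a\<in>A. \<tau> a \<in> E a) = 1 - (\<Prod>a\<in>A. 1 - of_bool (\<tau> a \<in> E a) :: real)" for \<tau>
    using \<open>finite A\<close> by (cases "\<exists>a\<in>A. \<tau> a \<in> E a") (auto simp: prod_zero_iff)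
  have "(\<Prod>a\<in>A. 1 - (\<Sum>b\<in>B a \<inter> E a. p a b)) = (\<Prod>a\<in>A. \<Sum>b\<in>B a. p a b * (1 - of_bool (b \<in> E a)))"
  proof (rule prod.cong [OF refl])
    fix a assume "a \<in> A"
    then show "1 - (\<Sum>b\<in>B a \<inter> E a. p a b) = (\<Sum>b\<in>B a. p a b * (1 - of_bool (b \<in> E a)))"
      using assms by (simp add: right_diff_distrib sum_subtractf)
  qed
  also have "\<dots> = (\<Sum>\<tau>\<in>PiE A B. \<Prod>a\<in>A. p a (\<tau> a) * (1 - of_bool (\<tau> a \<in> E a)))"
    using assms by (intro prod_sum_PiE) auto
  finally have "(\<Sum>\<tau>\<in>PiE A B. (\<Prod>a\<in>A. p a (\<tau> a)) * (\<Prod>a\<in>A. 1 - of_bool (\<tau> a \<in> E a)))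
      = (\<Prod>a\<in>A. 1 - (\<Sum>b\<in>B a \<inter> E a. p a b))"
    by (simp add: prod.distrib)
  moreover have "(\<Sum>\<tau>\<in>PiE A B. \<Prod>a\<in>A. p a (\<tau> a)) = 1"
    using prod_sum_PiE [of A B p] assms by simp
  ultimately show ?thesis
    by (simp add: miss algebra_simps sum_subtractf)
qed

lemma prod_one_minus_le_exp_neg_sum:
  fixes e :: "'a \<Rightarrow> real"
  assumes "\<And>a. a \<in> A \<Longrightarrow> 0 \<le> e a \<and> e a \<le> 1"
  shows "(\<Prod>a\<in>A. 1 - e a) \<le> exp (- (\<Sum>a\<in>A. e a))"
proof (cases "finite A")
  case True
  have "(\<Prod>a\<in>A. 1 - e a) \<le> (\<Prod>a\<in>A. exp (- e a))"
    using assms exp_ge_add_one_self [of "- e _"] by (intro prod_mono) force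
  also have "\<dots> = exp (- (\<Sum>a\<in>A. e a))"
    using exp_sum [OF True, of "\<lambda>a. - e a"] by (simp add: sum_negf)
  finally show ?thesis .
qed simp

lemma one_minus_exp_mult_ge:
  fixes d t :: real
  assumes "0 \<le> t" "t \<le> 1"
  shows "(1 - exp (- d)) * t \<le> 1 - exp (- d * t)"
  using convex_onD [OF exp_convex, of t 0 "- d"] assms by (simp add: algebra_simps)

lemma geometric_bracket:
  fixes g a b :: real
  assumes "0 < g" "g < 1" "0 < a" "a \<le> b"
  obtains q where "1 \<le> q" "g ^ q * b < a" "a \<le> g ^ (q - 1) * b"
proof -
  obtain N where "g ^ N < a / b"
    using real_arch_pow_inv [of "a / b" g] assms by auto
  then have "g ^ N * b < a"
    using assms by (simp add: field_simps)
  then obtain k where "\<forall>i\<le>k. \<not> g ^ i * b < a" "g ^ Suc k * b < a"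
    using ex_least_nat_less [of "\<lambda>q. g ^ q * b < a"] assms by auto
  then show ?thesis
    by (intro that [of "Suc k"]) auto
qed

lemma finite_geometric_ge:
  fixes g a b :: real
  assumes "0 \<le> g" "g < 1" "0 < a"
  shows "finite {q. a \<le> g ^ q * b}"
proof (cases "0 < b")
  case True
  obtain N where N: "g ^ N < a / b"
    using real_arch_pow_inv [of "a / b" g] assms True by auto
  have "{q. a \<le> g ^ q * b} \<subseteq> {..<N}"
  proof (rule subsetI, rule ccontr)
    fix q assume "q \<in> {q. a \<le> g ^ q * b}" "q \<notin> {..<N}"
    then have "a \<le> g ^ N * b"
      using power_decreasing [of N q g] assms True
      by (auto intro: order_trans mult_right_mono)
    with N True show False by (simp add: field_simps)
  qed
  then show ?thesis by (rule finite_subset) simp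
next
  case False
  then have "g ^ q * b \<le> 0" for q
    using assms by (simp add: mult_nonneg_nonpos)
  then have "g ^ q * b < a" for q
    using \<open>0 < a\<close> by (rule order.strict_trans1)
  then have "{q. a \<le> g ^ q * b} = {}"
    by (auto simp: not_le [symmetric])
  then show ?thesis by simp
qed

lemma cls_subset: "cls S s c \<beta> j q \<subseteq> S"
  by (auto simp: cls_def)

lemma ex_cls:
  assumes "0 < \<beta>" "\<beta> < 1" "i \<in> S" "0 < s i" "s i \<le> \<beta> * c j"
  obtains q where "1 \<le> q" "i \<in> cls S s c \<beta> j q"
proof -
  have "0 < 1 - sqrt \<beta>" "1 - sqrt \<beta> < 1"
    using assms by auto
  then obtain q where "1 \<le> q" "(1 - sqrt \<beta>) ^ q * (c j * \<beta>) < s i"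
      "s i \<le> (1 - sqrt \<beta>) ^ (q - 1) * (c j * \<beta>)"
    using geometric_bracket [of "1 - sqrt \<beta>" "s i" "c j * \<beta>"] assms by (auto simp: mult.commute)
  with assms show ?thesis
    by (intro that [of q]) (auto simp: cls_def mult.assoc)
qed

lemma finite_nonempty_cls:
  assumes "finite S" "\<forall>i\<in>S. 0 < s i" "0 < \<beta>" "\<beta> < 1"
  shows "finite {q. cls S s c \<beta> j q \<noteq> {}}"
proof -
  define g where "g = 1 - sqrt \<beta>"
  have g: "0 \<le> g" "g < 1"
    using assms by (auto simp: g_def)
  have "finite {q. s i \<le> g ^ (q - 1) * c j * \<beta>}" if "i \<in> S" for i
  proof -
    have "{q. s i \<le> g ^ (q - 1) * c j * \<beta>} \<subseteq> insert 0 (Suc ` {q. s i \<le> g ^ q * (c j * \<beta>)})"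
    proof
      fix q assume "q \<in> {q. s i \<le> g ^ (q - 1) * c j * \<beta>}"
      then show "q \<in> insert 0 (Suc ` {q. s i \<le> g ^ q * (c j * \<beta>)})"
        by (cases q) (auto simp: mult.assoc)
    qed
    moreover have "finite {q. s i \<le> g ^ q * (c j * \<beta>)}"
      using finite_geometric_ge g assms that by blast
    ultimately show ?thesis
      by (rule finite_subset [OF _ finite_insert [THEN iffD2, OF finite_imageI]])
  qed
  moreover have "{q. cls S s c \<beta> j q \<noteq> {}} \<subseteq> (\<Union>i\<in>S. {q. s i \<le> g ^ (q - 1) * c j * \<beta>})"
    by (auto simp: cls_def g_def)
  ultimately show ?thesis
    using assms(1) by (meson finite_UN_I finite_subset)
qed

lemma lp_feasible_placement:
  assumes "finite S" "finite V" "\<forall>i\<in>S. 0 \<le> s i" "\<forall>k\<in>U. T k \<subseteq> V"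
    and X: "feasible_placement S V s c X"
  shows "lp_feasible S V U s c svc T (\<lambda>i j. of_bool (j \<in> X i)) (\<lambda>k. of_bool (T k \<inter> X (svc k) \<noteq> {}))"
  unfolding lp_feasible_def
proof (intro conjI ballI impI)
  fix j assume "j \<in> V"
  then show load: "(\<Sum>i\<in>S. of_bool (j \<in> X i) * s i) \<le> c j"
    using X by (simp add: feasible_placement_def of_bool_def mult.commute)
  fix i assume "i \<in> S" "s i > c j"
  have "of_bool (j \<in> X i) * s i \<le> (\<Sum>i\<in>S. of_bool (j \<in> X i) * s i)"
    using \<open>i \<in> S\<close> assms(1,3) by (intro member_le_sum) auto
  with load \<open>s i > c j\<close> show "of_bool (j \<in> X i) = (0::real)"
    by auto
next
  fix k assume "k \<in> U"
  then have "finite (T k)"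
    using assms(2,4) finite_subset by blast
  show "of_bool (T k \<inter> X (svc k) \<noteq> {}) \<le> (\<Sum>j\<in>T k. of_bool (j \<in> X (svc k)) :: real)"
  proof (cases "T k \<inter> X (svc k) = {}")
    case False
    then obtain j where "j \<in> T k" "j \<in> X (svc k)" by blast
    then have "of_bool (j \<in> X (svc k)) \<le> (\<Sum>j\<in>T k. of_bool (j \<in> X (svc k)) :: real)"
      using \<open>finite (T k)\<close> by (intro member_le_sum) auto
    with \<open>j \<in> X (svc k)\<close> False show ?thesis by simp
  qed (simp add: sum_nonneg)
qed auto

lemma opt_reward_le_lp_objective:
  assumes "finite S" "finite V" "finite U" "\<forall>i\<in>S. 0 \<le> s i" "\<forall>j\<in>V. 0 \<le> c j"
    and "\<forall>k\<in>U. T k \<subseteq> V"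
    and opt: "lp_optimal S V U s c svc T w x y"
  shows "opt_reward S V U s c w svc T \<le> lp_objective U w y"
proof -
  let ?R = "{placement_reward U w svc T X | X. feasible_placement S V s c X}"
  have "?R \<subseteq> (\<lambda>K. \<Sum>k\<in>K. w k) ` Pow U"
  proof
    fix r assume "r \<in> ?R"
    then obtain X where "r = placement_reward U w svc T X" by blast
    also have "\<dots> = (\<Sum>k\<in>{k\<in>U. T k \<inter> X (svc k) \<noteq> {}}. w k)"
      unfolding placement_reward_def sum.inter_filter [OF \<open>finite U\<close>] by (intro sum.cong) auto
    finally show "r \<in> (\<lambda>K. \<Sum>k\<in>K. w k) ` Pow U" by blast
  qed
  then have "finite ?R"
    using \<open>finite U\<close> by (rule finite_subset [OF _ finite_imageI [OF finite_Pow_iff [THEN iffD2]]])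
  moreover have "feasible_placement S V s c (\<lambda>_. {})"
    using assms(5) by (simp add: feasible_placement_def)
  then have "?R \<noteq> {}" by blast
  moreover have "placement_reward U w svc T X \<le> lp_objective U w y"
    if "feasible_placement S V s c X" for X
  proof -
    have "lp_objective U w (\<lambda>k. of_bool (T k \<inter> X (svc k) \<noteq> {})) \<le> lp_objective U w y"
      using opt lp_feasible_placement [OF assms(1,2,4,6) that] by (auto simp: lp_optimal_def)
    then show ?thesis
      by (simp add: placement_reward_def lp_objective_def of_bool_def mult.commute)
  qed
  ultimately show ?thesis
    unfolding opt_reward_def by (intro Max.boundedI) auto
qed

locale slot_rounding =
  fixes S :: "'s set" and V :: "'v set" and U :: "'u set"
    and s :: "'s \<Rightarrow> real" and c :: "'v \<Rightarrow> real"
    and svc :: "'u \<Rightarrow> 's" and T :: "'u \<Rightarrow> 'v set" and w :: "'u \<Rightarrow> real"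
    and x :: "'s \<Rightarrow> 'v \<Rightarrow> real" and y :: "'u \<Rightarrow> real" and \<beta> :: real
  assumes finite_S: "finite S" and finite_V: "finite V"
    and s_pos: "\<And>i. i \<in> S \<Longrightarrow> 0 < s i" and c_pos: "\<And>j. j \<in> V \<Longrightarrow> 0 < c j"
    and user: "\<And>k. k \<in> U \<Longrightarrow> svc k \<in> S \<and> T k \<subseteq> V"
    and w_nonneg: "\<And>k. k \<in> U \<Longrightarrow> 0 \<le> w k"
    and lp: "lp_feasible S V U s c svc T x y"
    and beta_less_1: "\<beta> < 1"
    and size_le: "\<And>i j. i \<in> S \<Longrightarrow> j \<in> V \<Longrightarrow> s i \<le> \<beta> * c j"
begin

abbreviation \<delta> :: real where "\<delta> \<equiv> (1 - sqrt \<beta>) ^ 2"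

abbreviation \<Lambda> :: "('v \<times> nat \<times> nat) set" where "\<Lambda> \<equiv> slots S V s c \<beta> x"

abbreviation slot_cls :: "'v \<times> nat \<times> nat \<Rightarrow> 's set" where
  "slot_cls \<sigma> \<equiv> cls S s c \<beta> (fst \<sigma>) (fst (snd \<sigma>))"

definition slot_prob :: "'v \<times> nat \<times> nat \<Rightarrow> 's \<Rightarrow> real" where
  "slot_prob \<sigma> i = x i (fst \<sigma>) / dmass S s c \<beta> x (fst \<sigma>) (fst (snd \<sigma>))"

definition hit_prob :: "'u \<Rightarrow> 'v \<times> nat \<times> nat \<Rightarrow> real" where
  "hit_prob k \<sigma> = (if fst \<sigma> \<in> T k \<and> svc k \<in> slot_cls \<sigma> then slot_prob \<sigma> (svc k) else 0)"

lemma x_nonneg: "i \<in> S \<Longrightarrow> j \<in> V \<Longrightarrow> 0 \<le> x i j"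
  using lp by (simp add: lp_feasible_def)

lemma load_le_capacity: "j \<in> V \<Longrightarrow> (\<Sum>i\<in>S. s i * x i j) \<le> c j"
  using lp by (simp add: lp_feasible_def mult.commute)

lemma y_bounds: "k \<in> U \<Longrightarrow> 0 \<le> y k \<and> y k \<le> (\<Sum>j\<in>T k. x (svc k) j) \<and> y k \<le> 1"
  using lp by (simp add: lp_feasible_def)

lemma beta_pos: "i \<in> S \<Longrightarrow> j \<in> V \<Longrightarrow> 0 < \<beta>"
  using s_pos c_pos size_le by (meson less_le_trans zero_less_mult_pos2)

lemma slot_in_V: "\<sigma> \<in> \<Lambda> \<Longrightarrow> fst \<sigma> \<in> V"
  by (auto simp: slots_def)

lemma finite_slots: "finite \<Lambda>"
proof -
  have "finite {q. cls S s c \<beta> j q \<noteq> {}}" if "j \<in> V" for j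
  proof (cases "S = {}")
    case True
    then show ?thesis by (simp add: cls_def)
  next
    case False
    then obtain i where "i \<in> S" by blast
    with that have "0 < \<beta>" by (intro beta_pos)
    with finite_S s_pos beta_less_1 show ?thesis
      by (intro finite_nonempty_cls) auto
  qed
  then have "finite (SIGMA j:V. SIGMA q:{q. cls S s c \<beta> j q \<noteq> {}}. {..<nslots S s c \<beta> x j q})"
    using finite_V by (intro finite_SigmaI) auto
  moreover have "\<Lambda> \<subseteq> (SIGMA j:V. SIGMA q:{q. cls S s c \<beta> j q \<noteq> {}}. {..<nslots S s c \<beta> x j q})"
    by (auto simp: slots_def)
  ultimately show ?thesis
    by (rule finite_subset [rotated])
qed

lemma finite_cls: "finite (cls S s c \<beta> j q)"
  using finite_subset [OF cls_subset finite_S] .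

lemma x_nonneg_cls: "i \<in> cls S s c \<beta> j q \<Longrightarrow> j \<in> V \<Longrightarrow> 0 \<le> x i j"
  using x_nonneg cls_subset [of S s c \<beta> j q] by blast

lemma x_le_dmass:
  assumes "j \<in> V" "i \<in> cls S s c \<beta> j q"
  shows "x i j \<le> dmass S s c \<beta> x j q"
  unfolding dmass_def using assms x_nonneg_cls [OF _ assms(1)]
  by (intro member_le_sum finite_cls) auto

lemma dmass_pos:
  assumes "\<sigma> \<in> \<Lambda>"
  shows "0 < dmass S s c \<beta> x (fst \<sigma>) (fst (snd \<sigma>))"
proof -
  obtain j q m where \<sigma>: "\<sigma> = (j, q, m)" by (cases \<sigma>) auto
  with assms have "j \<in> V" and "nslots S s c \<beta> x j q \<noteq> 0"
    by (auto simp: slots_def)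
  then have "dmass S s c \<beta> x j q \<noteq> 0"
    by (intro notI) (simp add: nslots_def)
  moreover have "0 \<le> dmass S s c \<beta> x j q"
    unfolding dmass_def using x_nonneg_cls [OF _ \<open>j \<in> V\<close>] by (rule sum_nonneg)
  ultimately show ?thesis
    by (simp add: \<sigma>)
qed

lemma slot_prob_nonneg:
  assumes "\<sigma> \<in> \<Lambda>" "i \<in> slot_cls \<sigma>"
  shows "0 \<le> slot_prob \<sigma> i"
  using dmass_pos [OF assms(1)] x_nonneg_cls [OF assms(2) slot_in_V [OF assms(1)]]
  by (simp add: slot_prob_def)

lemma sum_slot_prob:
  assumes "\<sigma> \<in> \<Lambda>"
  shows "(\<Sum>i\<in>slot_cls \<sigma>. slot_prob \<sigma> i) = 1"
  using dmass_pos [OF assms] by (simp add: slot_prob_def dmass_def flip: sum_divide_distrib)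

lemma hit_prob_bounds:
  assumes "\<sigma> \<in> \<Lambda>"
  shows "0 \<le> hit_prob k \<sigma> \<and> hit_prob k \<sigma> \<le> 1"
proof (cases "fst \<sigma> \<in> T k \<and> svc k \<in> slot_cls \<sigma>")
  case True
  have "slot_prob \<sigma> (svc k) \<le> (\<Sum>i\<in>slot_cls \<sigma>. slot_prob \<sigma> i)"
    using True assms slot_prob_nonneg by (intro member_le_sum finite_cls) auto
  with True assms show ?thesis
    by (simp add: hit_prob_def sum_slot_prob slot_prob_nonneg)
qed (auto simp: hit_prob_def)

lemma covered_iff_some_slot_hit:
  "T k \<inter> placed S V s c \<beta> x \<tau> (svc k) \<noteq> {} \<longleftrightarrow>
     (\<exists>\<sigma>\<in>\<Lambda>. \<tau> \<sigma> \<in> {i. fst \<sigma> \<in> T k \<and> i = svc k})"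
  by (auto simp: placed_def)

lemma hit_prob_eq_sum:
  "hit_prob k \<sigma> = (\<Sum>i\<in>slot_cls \<sigma> \<inter> {i. fst \<sigma> \<in> T k \<and> i = svc k}. slot_prob \<sigma> i)"
proof (cases "fst \<sigma> \<in> T k \<and> svc k \<in> slot_cls \<sigma>")
  case True
  then have "slot_cls \<sigma> \<inter> {i. fst \<sigma> \<in> T k \<and> i = svc k} = {svc k}" by auto
  then show ?thesis unfolding hit_prob_def if_P [OF True] by simp
next
  case False
  then have "slot_cls \<sigma> \<inter> {i. fst \<sigma> \<in> T k \<and> i = svc k} = {}" by auto
  then show ?thesis unfolding hit_prob_def if_not_P [OF False] by simp
qed

lemma expected_reward_eq:
  "expected_reward S V U s c w svc T \<beta> x = (\<Sum>k\<in>U. w k * (1 - (\<Prod>\<sigma>\<in>\<Lambda>. 1 - hit_prob k \<sigma>)))"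
proof -
  have "expected_reward S V U s c w svc T \<beta> x =
      (\<Sum>k\<in>U. w k * (\<Sum>\<tau>\<in>PiE \<Lambda> slot_cls. (\<Prod>\<sigma>\<in>\<Lambda>. slot_prob \<sigma> (\<tau> \<sigma>)) *
         of_bool (\<exists>\<sigma>\<in>\<Lambda>. \<tau> \<sigma> \<in> {i. fst \<sigma> \<in> T k \<and> i = svc k})))"
    unfolding expected_reward_def allocations_def alloc_prob_def covered_iff_some_slot_hit
    by (simp add: slot_prob_def sum_distrib_left sum.swap [of _ U] algebra_simps of_bool_def)
  also have "\<dots> = (\<Sum>k\<in>U. w k * (1 - (\<Prod>\<sigma>\<in>\<Lambda>. 1 - hit_prob k \<sigma>)))"
    unfolding hit_prob_eq_sum
    by (intro sum.cong refl arg_cong [where f = "(*) (w _)"] product_prob_PiE_ex_mem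
        finite_slots finite_cls sum_slot_prob)
  finally show ?thesis .
qed

lemma delta_le_vfac:
  assumes "j \<in> V" "0 < (\<Sum>i\<in>S. s i * x i j)"
  shows "\<delta> \<le> vfac S s c \<beta> x j"
proof -
  have "\<delta> * (\<Sum>i\<in>S. s i * x i j) \<le> \<delta> * c j"
    using load_le_capacity [OF assms(1)] by (simp add: mult_left_mono)
  with assms(2) show ?thesis
    by (simp add: vfac_def pos_le_divide_eq)
qed

lemma delta_x_le_class_hit_mass:
  assumes "j \<in> V" "i \<in> cls S s c \<beta> j q" "0 < x i j"
  shows "\<delta> * x i j \<le> real (nslots S s c \<beta> x j q) * (x i j / dmass S s c \<beta> x j q)"
proof -
  let ?d = "dmass S s c \<beta> x j q" and ?v = "vfac S s c \<beta> x j"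
  have "i \<in> S" using subsetD [OF cls_subset assms(2)] .
  have "s i * x i j \<le> (\<Sum>i\<in>S. s i * x i j)"
    using \<open>i \<in> S\<close> assms(1)
    by (intro member_le_sum finite_S) (auto intro!: mult_nonneg_nonneg less_imp_le [OF s_pos] x_nonneg)
  moreover have "0 < s i * x i j"
    using \<open>i \<in> S\<close> s_pos assms(3) by simp
  ultimately have "\<delta> \<le> ?v"
    using assms(1) delta_le_vfac by simp
  have "0 < ?d"
    using x_le_dmass [OF assms(1,2)] assms(3) by simp
  have "\<delta> * x i j \<le> ?v * x i j"
    using \<open>\<delta> \<le> ?v\<close> assms(3) by simp
  also have "\<dots> = (?v * ?d) * (x i j / ?d)"
    using \<open>0 < ?d\<close> by simp
  also have "\<dots> \<le> real (nslots S s c \<beta> x j q) * (x i j / ?d)"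
    using \<open>0 < ?d\<close> assms(3) real_nat_ceiling_ge [of "?v * ?d"]
    by (intro mult_right_mono) (auto simp: nslots_def)
  finally show ?thesis .
qed

lemma delta_y_le_sum_hit_prob:
  assumes "k \<in> U"
  shows "\<delta> * y k \<le> (\<Sum>\<sigma>\<in>\<Lambda>. hit_prob k \<sigma>)"
proof -
  define i where "i = svc k"
  define J where "J = {j \<in> T k. 0 < x i j}"
  have i: "i \<in> S" and TV: "T k \<subseteq> V"
    using user [OF assms] by (auto simp: i_def)
  have "\<exists>q. 1 \<le> q \<and> i \<in> cls S s c \<beta> j q" if "j \<in> J" for j
  proof -
    have j: "j \<in> V" using that TV by (auto simp: J_def)
    obtain q where "1 \<le> q" "i \<in> cls S s c \<beta> j q"
      using ex_cls [of \<beta> i S s c j] beta_pos [OF i j] beta_less_1 i s_pos [OF i] size_le [OF i j]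
      by blast
    then show ?thesis by blast
  qed
  then obtain qf where qf: "\<And>j. j \<in> J \<Longrightarrow> 1 \<le> qf j \<and> i \<in> cls S s c \<beta> j (qf j)"
    by (metis (no_types))
  define n where "n j = nslots S s c \<beta> x j (qf j)" for j
  define \<Lambda>\<^sub>k where "\<Lambda>\<^sub>k = (SIGMA j:J. {qf j} \<times> {..<n j})"
  have "finite (T k)"
    using TV finite_V finite_subset by blast
  then have "finite J" by (simp add: J_def)
  have "\<Lambda>\<^sub>k \<subseteq> \<Lambda>"
  proof
    fix \<sigma> assume "\<sigma> \<in> \<Lambda>\<^sub>k"
    then obtain j m where "j \<in> J" "m < n j" "\<sigma> = (j, qf j, m)"
      by (auto simp: \<Lambda>\<^sub>k_def)
    with qf [of j] TV show "\<sigma> \<in> \<Lambda>"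
      by (auto simp: slots_def J_def n_def)
  qed
  have hit: "hit_prob k (j, p) = x i j / dmass S s c \<beta> x j (qf j)"
    if "j \<in> J" "p \<in> {qf j} \<times> {..<n j}" for j p
    using that qf [OF that(1)] by (auto simp: hit_prob_def slot_prob_def J_def i_def)
  have "\<delta> * y k \<le> \<delta> * (\<Sum>j\<in>T k. x i j)"
    using y_bounds [OF assms] by (simp add: i_def mult_left_mono)
  also have "(\<Sum>j\<in>T k. x i j) = (\<Sum>j\<in>J. x i j)"
  proof (rule sum.mono_neutral_right [OF \<open>finite (T k)\<close>])
    show "J \<subseteq> T k" by (auto simp: J_def)
    show "\<forall>j\<in>T k - J. x i j = 0"
      using i TV x_nonneg by (auto simp: J_def order.order_iff_strict)
  qed
  also have "\<delta> * (\<Sum>j\<in>J. x i j) \<le> (\<Sum>j\<in>J. real (n j) * (x i j / dmass S s c \<beta> x j (qf j)))"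
    unfolding sum_distrib_left n_def
  proof (rule sum_mono)
    fix j assume "j \<in> J"
    with qf [OF this] TV
    show "\<delta> * x i j \<le> real (nslots S s c \<beta> x j (qf j)) * (x i j / dmass S s c \<beta> x j (qf j))"
      by (intro delta_x_le_class_hit_mass) (auto simp: J_def)
  qed
  also have "\<dots> = (\<Sum>j\<in>J. \<Sum>p\<in>{qf j} \<times> {..<n j}. hit_prob k (j, p))"
    using hit by (simp add: card_cartesian_product)
  also have "\<dots> = (\<Sum>\<sigma>\<in>\<Lambda>\<^sub>k. hit_prob k \<sigma>)"
    unfolding \<Lambda>\<^sub>k_def using \<open>finite J\<close> by (simp add: sum.Sigma)
  also have "\<dots> \<le> (\<Sum>\<sigma>\<in>\<Lambda>. hit_prob k \<sigma>)"
    using \<open>\<Lambda>\<^sub>k \<subseteq> \<Lambda>\<close> finite_slots hit_prob_bounds by (intro sum_mono2) auto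
  finally show ?thesis .
qed

lemma coverage_prob_ge:
  assumes "k \<in> U"
  shows "(1 - exp (- \<delta>)) * y k \<le> 1 - (\<Prod>\<sigma>\<in>\<Lambda>. 1 - hit_prob k \<sigma>)"
proof -
  have "(\<Prod>\<sigma>\<in>\<Lambda>. 1 - hit_prob k \<sigma>) \<le> exp (- (\<Sum>\<sigma>\<in>\<Lambda>. hit_prob k \<sigma>))"
    using hit_prob_bounds by (rule prod_one_minus_le_exp_neg_sum)
  also have "\<dots> \<le> exp (- \<delta> * y k)"
    using delta_y_le_sum_hit_prob [OF assms] by simp
  finally show ?thesis
    using one_minus_exp_mult_ge [of "y k" \<delta>] y_bounds [OF assms] by simp
qed

theorem expected_reward_ge_lp_objective:
  "(1 - exp (- \<delta>)) * lp_objective U w y \<le> expected_reward S V U s c w svc T \<beta> x"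
proof -
  have "(1 - exp (- \<delta>)) * lp_objective U w y = (\<Sum>k\<in>U. w k * ((1 - exp (- \<delta>)) * y k))"
    unfolding lp_objective_def sum_distrib_left by (simp add: mult_ac)
  also have "\<dots> \<le> (\<Sum>k\<in>U. w k * (1 - (\<Prod>\<sigma>\<in>\<Lambda>. 1 - hit_prob k \<sigma>)))"
    using coverage_prob_ge w_nonneg by (intro sum_mono mult_left_mono)
  finally show ?thesis
    by (simp add: expected_reward_eq)
qed

end

theorem theorem5:
  fixes S :: "'s set" and V :: "'v set" and U :: "'u set"
    and s :: "'s \<Rightarrow> real" and c :: "'v \<Rightarrow> real"
    and svc :: "'u \<Rightarrow> 's" and T :: "'u \<Rightarrow> 'v set" and w :: "'u \<Rightarrow> real"
    and x :: "'s \<Rightarrow> 'v \<Rightarrow> real" and y :: "'u \<Rightarrow> real" and \<beta> :: real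
  assumes "finite S" and "finite V" and "finite U"
    and "\<forall>i\<in>S. s i > 0" and "\<forall>j\<in>V. c j > 0"
    and "\<forall>k\<in>U. svc k \<in> S \<and> T k \<subseteq> V \<and> w k > 0"
    and "lp_optimal S V U s c svc T w x y"
    and "\<beta> < 1" and "\<forall>i\<in>S. \<forall>j\<in>V. s i \<le> \<beta> * c j"
  shows "expected_reward S V U s c w svc T \<beta> x
           \<ge> (1 - exp (- ((1 - sqrt \<beta>) ^ 2))) * opt_reward S V U s c w svc T"
proof -
  interpret slot_rounding S V U s c svc T w x y \<beta>
    using assms by unfold_locales (auto simp: lp_optimal_def less_imp_le)
  have "opt_reward S V U s c w svc T \<le> lp_objective U w y"
    using assms by (intro opt_reward_le_lp_objective) (auto simp: less_imp_le)
  then have "(1 - exp (- \<delta>)) * opt_reward S V U s c w svc T \<le> (1 - exp (- \<delta>)) * lp_objective U w y"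
    by (rule mult_left_mono) simp
  with expected_reward_ge_lp_objective show ?thesis
    by linarith
qed

end
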